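(* Let $w$ be a nonnegative continuous weight on $[-1,1]$ and $\{p_l\}$ the orthonormal polynomials (positive leading coefficients) with recurrence $b_{l+1}p_{l+1}(x)=(x-a_l)p_l(x)-b_lp_{l-1}(x)$, $p_{-1}=0$, $p_0=1/b_0$, $a_l\in\mathbb{R}$, $b_l>0$. Let $0\le m\le n$, $\gamma\in\mathbb{R}$, $\delta\ge0$. Then for $x\ne y$: $\sum_{k=m}^np_k(x)p_{k-m}(y,m)=b_{n+1}\dfrac{p_{n+1}(x)p_{n-m}(y,m)-p_{n-m+1}(y,m)p_n(x)}{x-y}+b_m\dfrac{p_{m-1}(x)}{x-y}$, and $\sum_{k=m}^np_k(x)p_{k-m}(y,m,\gamma,\delta)=b_{n+1}\dfrac{p_{n+1}(x)p_{n-m}(y,m,\gamma,\delta)-p_{n-m+1}(y,m,\gamma,\delta)p_n(x)}{x-y}+\dfrac{p_m(x)((\delta-1)y-\gamma)}{x-y}+b_m\dfrac{p_{m-1}(x)}{x-y}$.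
   Context: Associated polynomials: $p_{-1}(x,m)=0$, $p_0(x,m)=1$, $b_{m+l+1}p_{l+1}(x,m)=(x-a_{m+l})p_l(x,m)-b_{m+l}p_{l-1}(x,m)$ for $l\ge0$. Scaled co-recursive associated polynomials: $p_0(x,m,\gamma,\delta)=1$, $p_1(x,m,\gamma,\delta)=(\delta x-a_m-\gamma)/b_{m+1}$, and $b_{m+l+1}p_{l+1}(x,m,\gamma,\delta)=(x-a_{m+l})p_l(x,m,\gamma,\delta)-b_{m+l}p_{l-1}(x,m,\gamma,\delta)$ for $l\ge1$. *)

theory Defs
  imports "HOL-Analysis.Analysis" "HOL-Computational_Algebra.Polynomial"
begin

fun assoc_poly :: "(nat \<Rightarrow> real) \<Rightarrow> (nat \<Rightarrow> real) \<Rightarrow> nat \<Rightarrow> nat \<Rightarrow> real \<Rightarrow> real" where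
  "assoc_poly a b m 0 x = 1"
| "assoc_poly a b m (Suc 0) x = (x - a m) / b (m + 1)"
| "assoc_poly a b m (Suc (Suc l)) x =
     ((x - a (m + l + 1)) * assoc_poly a b m (Suc l) x - b (m + l + 1) * assoc_poly a b m l x)
       / b (m + l + 2)"

fun sc_assoc_poly :: "(nat \<Rightarrow> real) \<Rightarrow> (nat \<Rightarrow> real) \<Rightarrow> nat \<Rightarrow> real \<Rightarrow> real \<Rightarrow> nat \<Rightarrow> real \<Rightarrow> real" where
  "sc_assoc_poly a b m \<gamma> \<delta> 0 x = 1"
| "sc_assoc_poly a b m \<gamma> \<delta> (Suc 0) x = (\<delta> * x - a m - \<gamma>) / b (m + 1)"
| "sc_assoc_poly a b m \<gamma> \<delta> (Suc (Suc l)) x =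
     ((x - a (m + l + 1)) * sc_assoc_poly a b m \<gamma> \<delta> (Suc l) x
        - b (m + l + 1) * sc_assoc_poly a b m \<gamma> \<delta> l x) / b (m + l + 2)"

end

theory Submission
  imports Defs
begin

text \<open>Multiply the sum by \<open>x - y\<close> and write \<open>x - y = (x - a k) - (y - a k)\<close>: the
  three-term recurrences of both families turn each summand into a difference of consecutive
  Casoratians \<open>b (k + 1) * (P (k + 1) * Q (k - m) - Q (k - m + 1) * P k)\<close>, so the sum
  telescopes. Only boundary terms survive: the top Casoratian, \<open>b m * P (m - 1)\<close>, and the
  defect by which \<open>Q 1\<close> deviates from the recurrence started at \<open>Q (-1) = 0\<close>. This defect
  vanishes for the associated polynomials and equals \<open>(\<delta> - 1) y - \<gamma>\<close> for the scaled
  co-recursive ones.\<close>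

lemma mixed_christoffel_darboux:
  fixes P Q a b :: "nat \<Rightarrow> real" and x y :: real
  assumes P_rec: "\<And>l. b (l + 1) * P (l + 1) = (x - a l) * P l - (if l = 0 then 0 else b l * P (l - 1))"
    and Q0: "Q 0 = 1"
    and Q_rec: "\<And>l. b (m + l + 2) * Q (l + 2) = (y - a (m + l + 1)) * Q (l + 1) - b (m + l + 1) * Q l"
    and "m \<le> n"
  shows "(x - y) * (\<Sum>k=m..n. P k * Q (k - m)) =
     b (n + 1) * (P (n + 1) * Q (n - m) - Q (n - m + 1) * P n)
     + b m * (if m = 0 then 0 else P (m - 1))
     + P m * (b (m + 1) * Q 1 - (y - a m))"
  using \<open>m \<le> n\<close>
proof (induction n rule: dec_induct)
  case base
  show ?case using P_rec[of m] Q0 by (cases "m = 0") (simp_all add: algebra_simps)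
next
  case (step n)
  define j where "j = n - m"
  have n: "n = m + j" using step.hyps(1) by (simp add: j_def)
  have P_step: "b (n + 2) * P (n + 2) = (x - a (n + 1)) * P (n + 1) - b (n + 1) * P n"
    using P_rec[of "n + 1"] by simp
  have Q_step: "b (n + 2) * Q (j + 2) = (y - a (n + 1)) * Q (j + 1) - b (n + 1) * Q j"
    using Q_rec[of j] by (simp add: n add.assoc)
  have "(x - y) * (\<Sum>k=m..Suc n. P k * Q (k - m))
      = (x - y) * (\<Sum>k=m..n. P k * Q (k - m)) + (x - y) * P (n + 1) * Q (j + 1)"
    using step.hyps(1) by (simp add: algebra_simps n)
  also have "\<dots> = (b (n + 2) * P (n + 2)) * Q (j + 1) - (b (n + 2) * Q (j + 2)) * P (n + 1)
      + b m * (if m = 0 then 0 else P (m - 1)) + P m * (b (m + 1) * Q 1 - (y - a m))"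
    unfolding step.IH P_step Q_step by (simp add: algebra_simps j_def)
  finally show ?case by (simp add: algebra_simps n)
qed

lemma assoc_poly_recurrence:
  assumes "b (m + l + 2) \<noteq> 0"
  shows "b (m + l + 2) * assoc_poly a b m (l + 2) y
       = (y - a (m + l + 1)) * assoc_poly a b m (l + 1) y - b (m + l + 1) * assoc_poly a b m l y"
  using assms by (simp add: numeral_2_eq_2)

lemma sc_assoc_poly_recurrence:
  assumes "b (m + l + 2) \<noteq> 0"
  shows "b (m + l + 2) * sc_assoc_poly a b m \<gamma> \<delta> (l + 2) y
       = (y - a (m + l + 1)) * sc_assoc_poly a b m \<gamma> \<delta> (l + 1) y
         - b (m + l + 1) * sc_assoc_poly a b m \<gamma> \<delta> l y"
  using assms by (simp add: numeral_2_eq_2)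

lemma assoc_poly_initial_defect:
  assumes "b (m + 1) \<noteq> 0"
  shows "b (m + 1) * assoc_poly a b m 1 y - (y - a m) = 0"
  using assms by simp

lemma sc_assoc_poly_initial_defect:
  assumes "b (m + 1) \<noteq> 0"
  shows "b (m + 1) * sc_assoc_poly a b m \<gamma> \<delta> 1 y - (y - a m) = (\<delta> - 1) * y - \<gamma>"
  using assms by (simp add: field_simps)

theorem lemma3p1:
  fixes w :: "real \<Rightarrow> real" and p :: "nat \<Rightarrow> real poly"
    and a b :: "nat \<Rightarrow> real" and m n :: nat and \<gamma> \<delta> x y :: real
  assumes w_cont: "continuous_on {-1..1} w"
    and w_nonneg: "\<And>t. t \<in> {-1..1} \<Longrightarrow> w t \<ge> 0"
    and p_deg: "\<And>l. degree (p l) = l"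
    and p_lead: "\<And>l. lead_coeff (p l) > 0"
    and p_orth: "\<And>k l. integral {-1..1} (\<lambda>t. poly (p k) t * poly (p l) t * w t)
                        = (if k = l then 1 else 0)"
    and b_pos: "\<And>l. b l > 0"
    and p0: "\<And>t. poly (p 0) t = 1 / b 0"
    and rec0: "\<And>t. b 1 * poly (p 1) t = (t - a 0) * poly (p 0) t"
    and rec: "\<And>l t. l \<ge> 1 \<Longrightarrow>
       b (l + 1) * poly (p (l + 1)) t = (t - a l) * poly (p l) t - b l * poly (p (l - 1)) t"
    and mn: "m \<le> n"
    and delta: "\<delta> \<ge> 0"
    and xy: "x \<noteq> y"
  shows "((\<Sum>k=m..n. poly (p k) x * assoc_poly a b m (k - m) y)
           = b (n + 1) * (poly (p (n + 1)) x * assoc_poly a b m (n - m) y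
                          - assoc_poly a b m (n - m + 1) y * poly (p n) x) / (x - y)
             + b m * (if m = 0 then 0 else poly (p (m - 1)) x) / (x - y))
         \<and> ((\<Sum>k=m..n. poly (p k) x * sc_assoc_poly a b m \<gamma> \<delta> (k - m) y)
           = b (n + 1) * (poly (p (n + 1)) x * sc_assoc_poly a b m \<gamma> \<delta> (n - m) y
                          - sc_assoc_poly a b m \<gamma> \<delta> (n - m + 1) y * poly (p n) x) / (x - y)
             + poly (p m) x * ((\<delta> - 1) * y - \<gamma>) / (x - y)
             + b m * (if m = 0 then 0 else poly (p (m - 1)) x) / (x - y))"
proof -
  have b_nz: "\<And>l. b l \<noteq> 0" using b_pos by (metis less_irrefl)
  have p_rec: "b (l + 1) * poly (p (l + 1)) x
      = (x - a l) * poly (p l) x - (if l = 0 then 0 else b l * poly (p (l - 1)) x)" for l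
    using rec0[of x] rec[of l x] by (cases "l = 0") simp_all
  note cd = mixed_christoffel_darboux[where P = "\<lambda>k. poly (p k) x", OF p_rec _ _ mn]
  have A: "(x - y) * (\<Sum>k=m..n. poly (p k) x * assoc_poly a b m (k - m) y) =
      b (n + 1) * (poly (p (n + 1)) x * assoc_poly a b m (n - m) y
                   - assoc_poly a b m (n - m + 1) y * poly (p n) x)
      + b m * (if m = 0 then 0 else poly (p (m - 1)) x)"
    using cd[where Q = "\<lambda>l. assoc_poly a b m l y", OF _ assoc_poly_recurrence[OF b_nz]]
      assoc_poly_initial_defect[where a = a and b = b and y = y, OF b_nz] by simp
  have B: "(x - y) * (\<Sum>k=m..n. poly (p k) x * sc_assoc_poly a b m \<gamma> \<delta> (k - m) y) =
      b (n + 1) * (poly (p (n + 1)) x * sc_assoc_poly a b m \<gamma> \<delta> (n - m) y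
                   - sc_assoc_poly a b m \<gamma> \<delta> (n - m + 1) y * poly (p n) x)
      + b m * (if m = 0 then 0 else poly (p (m - 1)) x)
      + poly (p m) x * ((\<delta> - 1) * y - \<gamma>)"
    using cd[where Q = "\<lambda>l. sc_assoc_poly a b m \<gamma> \<delta> l y", OF _ sc_assoc_poly_recurrence[OF b_nz]]
    unfolding sc_assoc_poly_initial_defect[where a = a and b = b and y = y and \<gamma> = \<gamma> and \<delta> = \<delta>, OF b_nz]
    by (simp add: algebra_simps)
  have "x - y \<noteq> 0" using xy by simp
  with A B show ?thesis
    by (simp only: add_divide_distrib[symmetric] eq_divide_eq) (simp add: algebra_simps)
qed

end
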